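(* Let $B_0,\ldots,B_N$ be complex $d\times d$ matrices, $T(\lambda)=\sum_{i=0}^N\lambda^iB_i$, and $\mathcal{F}(\lambda)=\det T(\lambda)$. Let $e\ge0$ be the largest integer such that $\lambda^e$ divides $\mathcal{F}(\lambda)$, so $\mathcal{F}(\lambda)=\lambda^eg(\lambda)$ with $g$ a polynomial, $g(0)\ne0$. Let $\boldsymbol\lambda=(\lambda_1,\ldots,\lambda_m)$ be a stable non-resonant vector of eigenvalues none of which is zero. Then there exists a constant $C>0$ such that $$\|T(\boldsymbol\lambda^\alpha)^{-1}\|\le C\,|\boldsymbol\lambda^\alpha|^{-e}\qquad\text{for all }\alpha\in\mathbb{Z}_+^m\text{ with }|\alpha|\ge2.$$
   Context: $\|\cdot\|$ is any fixed matrix norm. $\boldsymbol\lambda^\alpha=\prod\lambda_i^{\alpha_i}$. A vector $\boldsymbol\lambda\in\mathbb{C}^m$ is a stable non-resonant vector of eigenvalues if $|\lambda_i|<1$, $\mathcal{F}(\lambda_i)=0$ for all $i$, and $\mathcal{F}(\boldsymbol\lambda^\alpha)\ne0$ for all $\alpha\in\mathbb{Z}_+^m$ with $|\alpha|\ge2$. *)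

theory Defs
  imports "HOL-Analysis.Analysis" "HOL-Computational_Algebra.Polynomial"
begin

definition Tmat :: "(nat \<Rightarrow> complex^'d^'d) \<Rightarrow> nat \<Rightarrow> complex \<Rightarrow> complex^'d^'d" where
  "Tmat B N x = (\<chi> i j. \<Sum>k\<le>N. x ^ k * (B k $ i $ j))"

definition Fdet :: "(nat \<Rightarrow> complex^'d^'d) \<Rightarrow> nat \<Rightarrow> complex \<Rightarrow> complex" where
  "Fdet B N x = det (Tmat B N x)"

definition mpow :: "nat \<Rightarrow> (nat \<Rightarrow> complex) \<Rightarrow> (nat \<Rightarrow> nat) \<Rightarrow> complex" where
  "mpow m lam \<alpha> = (\<Prod>i<m. lam i ^ \<alpha> i)"

definition mlen :: "nat \<Rightarrow> (nat \<Rightarrow> nat) \<Rightarrow> nat" where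
  "mlen m \<alpha> = (\<Sum>i<m. \<alpha> i)"

definition stable_nonresonant :: "(complex \<Rightarrow> complex) \<Rightarrow> nat \<Rightarrow> (nat \<Rightarrow> complex) \<Rightarrow> bool" where
  "stable_nonresonant F m lam \<longleftrightarrow>
     (\<forall>i<m. norm (lam i) < 1 \<and> F (lam i) = 0) \<and>
     (\<forall>\<alpha>. mlen m \<alpha> \<ge> 2 \<longrightarrow> F (mpow m lam \<alpha>) \<noteq> 0)"

end

theory Submission imports Defs begin

text \<open>
  Write z = \<lambda>^\<alpha>.  By Cramer's rule every entry of T(z)^{-1} is an
  adjugate entry (a cofactor of T(z)) divided by det T(z) = z^e g(z).  The cofactors
  are polynomial, hence continuous, in z and therefore bounded on the closed unit disc,
  which contains all z = \<lambda>^\<alpha> because the eigenvalues are stable.  It remains to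
  bound |g(z)| from below uniformly: near 0 this follows from g(0) \<noteq> 0 and continuity;
  away from 0 only finitely many points \<lambda>^\<alpha> occur (|\<lambda>^\<alpha>| \<le> r^{|\<alpha>|} with r < 1),
  and g does not vanish at any of them by non-resonance.
\<close>

definition adj_entry :: "'a::field^'d^'d \<Rightarrow> 'd \<Rightarrow> 'd \<Rightarrow> 'a" where
  "adj_entry A i j = det (\<chi> p q. if q = i then (axis j 1 :: 'a^'d) $ p else A $ p $ q)"

lemma matrix_inv_entry:
  fixes A :: "'a::field^'d^'d"
  assumes "det A \<noteq> 0"
  shows "matrix_inv A $ i $ j = adj_entry A i j / det A"
proof -
  have "invertible A" using assms invertible_det_nz by blast
  then have right_inv: "A ** matrix_inv A = mat 1"
    unfolding invertible_def matrix_inv_def by (rule someI2_ex) auto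
  have "A *v (matrix_inv A *v axis j 1) = axis j 1"
    by (simp add: matrix_vector_mul_assoc right_inv)
  then have "matrix_inv A *v axis j 1
      = (\<chi> k. det (\<chi> p q. if q = k then (axis j 1 :: 'a^'d) $ p else A $ p $ q) / det A)"
    using cramer[OF assms] by blast
  moreover have "(matrix_inv A *v axis j 1) $ i = matrix_inv A $ i $ j"
    by (simp add: matrix_vector_mult_def axis_def if_distrib cong: if_cong)
  ultimately show ?thesis by (simp add: adj_entry_def)
qed

lemma norm_matrix_le_sum_entries:
  fixes M :: "'a::real_normed_vector^'n^'m"
  shows "norm M \<le> (\<Sum>i\<in>UNIV. \<Sum>j\<in>UNIV. norm (M $ i $ j))"
proof -
  have "norm M \<le> (\<Sum>i\<in>UNIV. norm (M $ i))"
    unfolding norm_vec_def by (rule L2_set_le_sum) simp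
  also have "\<dots> \<le> (\<Sum>i\<in>UNIV. \<Sum>j\<in>UNIV. norm (M $ i $ j))"
    unfolding norm_vec_def by (intro sum_mono L2_set_le_sum) simp
  finally show ?thesis .
qed

definition adj_size :: "complex^'d^'d \<Rightarrow> real" where
  "adj_size A = (\<Sum>i\<in>UNIV. \<Sum>j\<in>UNIV. norm (adj_entry A i j))"

lemma norm_matrix_inv_le:
  fixes A :: "complex^'d^'d"
  assumes "det A \<noteq> 0"
  shows "norm (matrix_inv A) \<le> adj_size A / norm (det A)"
proof -
  have "norm (matrix_inv A) \<le> (\<Sum>i\<in>UNIV. \<Sum>j\<in>UNIV. norm (matrix_inv A $ i $ j))"
    by (rule norm_matrix_le_sum_entries)
  also have "\<dots> = adj_size A / norm (det A)"
    unfolding adj_size_def matrix_inv_entry[OF assms]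
    by (simp add: norm_divide sum_divide_distrib)
  finally show ?thesis .
qed

lemma continuous_adj_entry_Tmat:
  fixes B :: "nat \<Rightarrow> complex^'d^'d"
  shows "continuous_on UNIV (\<lambda>z. adj_entry (Tmat B N z) i j)"
proof -
  have "continuous_on UNIV (\<lambda>z. if q = i then (axis j 1 :: complex^'d) $ p
              else Tmat B N z $ p $ q)" for p q
    by (cases "q = i") (auto simp: Tmat_def intro!: continuous_intros)
  then show ?thesis
    unfolding adj_entry_def det_def by (intro continuous_intros) auto
qed

lemma adj_size_Tmat_bounded:
  fixes B :: "nat \<Rightarrow> complex^'d^'d"
  obtains K where "K \<ge> 0" and "\<And>z. norm z \<le> 1 \<Longrightarrow> adj_size (Tmat B N z) \<le> K"
proof -
  have "continuous_on UNIV (\<lambda>z. adj_size (Tmat B N z))"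
    unfolding adj_size_def
    by (intro continuous_intros
          continuous_on_compose2[OF continuous_on_norm_id continuous_adj_entry_Tmat]) auto
  then have "compact ((\<lambda>z. adj_size (Tmat B N z)) ` cball 0 1)"
    by (intro compact_continuous_image) (auto intro: continuous_on_subset)
  then obtain K where K: "\<And>z. z \<in> cball 0 1 \<Longrightarrow> norm (adj_size (Tmat B N z)) \<le> K"
    using compact_imp_bounded bounded_iff by (metis image_eqI)
  have bound: "adj_size (Tmat B N z) \<le> K" if "norm z \<le> 1" for z
    using K[of z] that by simp
  have "0 \<le> adj_size (Tmat B N 0)"
    unfolding adj_size_def by (intro sum_nonneg) auto
  with bound[of 0] have "K \<ge> 0" by simp
  with bound show thesis using that by blast
qed

lemma norm_inv_Tmat_le:
  fixes B :: "nat \<Rightarrow> complex^'d^'d"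
  assumes det_eq: "det (Tmat B N z) = z ^ e * w"
    and z: "z \<noteq> 0" and c: "0 < c" "c \<le> norm w"
    and K: "adj_size (Tmat B N z) \<le> K"
  shows "norm (matrix_inv (Tmat B N z)) \<le> (K / c) * norm z powi (- int e)"
proof -
  have zpow: "norm z ^ e > 0" using z by simp
  have det_lower: "norm z ^ e * c \<le> norm (det (Tmat B N z))"
    unfolding det_eq norm_mult norm_power using c zpow by (simp add: mult_left_mono)
  have det_pos: "0 < norm z ^ e * c" using zpow c by simp
  have "0 \<le> adj_size (Tmat B N z)" unfolding adj_size_def by (intro sum_nonneg) auto
  then have K0: "0 \<le> K" using K by simp
  have "norm (matrix_inv (Tmat B N z)) \<le> adj_size (Tmat B N z) / norm (det (Tmat B N z))"
    using det_pos det_lower by (intro norm_matrix_inv_le) auto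
  also have "\<dots> \<le> K / norm (det (Tmat B N z))"
    using K by (simp add: divide_right_mono)
  also have "\<dots> \<le> K / (norm z ^ e * c)"
    using divide_left_mono[OF det_lower K0 mult_pos_pos[OF _ det_pos]] det_pos det_lower
    by linarith
  also have "\<dots> = (K / c) * norm z powi (- int e)"
    by (simp add: power_int_minus field_simps)
  finally show ?thesis .
qed

lemma norm_mpow_le:
  assumes "\<And>i. i < m \<Longrightarrow> norm (lam i) \<le> r"
  shows "norm (mpow m lam \<alpha>) \<le> r ^ mlen m \<alpha>"
proof -
  have "norm (mpow m lam \<alpha>) = (\<Prod>i<m. norm (lam i) ^ \<alpha> i)"
    by (simp add: mpow_def prod_norm[symmetric] norm_power)
  also have "\<dots> \<le> (\<Prod>i<m. r ^ \<alpha> i)"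
    using assms by (intro prod_mono) (auto intro: power_mono)
  also have "\<dots> = r ^ mlen m \<alpha>" by (simp add: mlen_def power_sum)
  finally show ?thesis .
qed

lemma finite_mpow_bounded_length:
  "finite {mpow m lam \<alpha> | \<alpha>. mlen m \<alpha> \<le> n}"
proof (rule finite_subset)
  show "{mpow m lam \<alpha> | \<alpha>. mlen m \<alpha> \<le> n}
      \<subseteq> (\<lambda>f. \<Prod>i<m. lam i ^ f i) ` ({..<m} \<rightarrow>\<^sub>E {..n})"
  proof clarify
    fix \<alpha> assume len: "mlen m \<alpha> \<le> n"
    have "\<alpha> i \<le> n" if "i < m" for i
      using len that member_le_sum[of i "{..<m}" \<alpha>] unfolding mlen_def by simp
    then have "restrict \<alpha> {..<m} \<in> {..<m} \<rightarrow>\<^sub>E {..n}" by auto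
    moreover have "mpow m lam \<alpha> = (\<Prod>i<m. lam i ^ restrict \<alpha> {..<m} i)"
      unfolding mpow_def by (intro prod.cong) auto
    ultimately show "mpow m lam \<alpha> \<in> (\<lambda>f. \<Prod>i<m. lam i ^ f i) ` ({..<m} \<rightarrow>\<^sub>E {..n})"
      by blast
  qed
qed (intro finite_imageI finite_PiE; simp)

lemma finite_mpow_outside_ball:
  assumes r: "0 \<le> r" "r < 1" "\<And>i. i < m \<Longrightarrow> norm (lam i) \<le> r" and "\<delta> > 0"
  shows "finite {mpow m lam \<alpha> | \<alpha>. \<delta> \<le> norm (mpow m lam \<alpha>)}"
proof -
  have "(\<lambda>n. r ^ n) \<longlonglongrightarrow> 0" using r by (intro LIMSEQ_power_zero) auto
  then obtain n0 where n0: "\<And>n. n \<ge> n0 \<Longrightarrow> r ^ n < \<delta>"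
    using \<open>\<delta> > 0\<close> r(1) unfolding lim_sequentially by (force simp: dist_real_def)
  have "mlen m \<alpha> \<le> n0" if "\<delta> \<le> norm (mpow m lam \<alpha>)" for \<alpha>
    using that norm_mpow_le[where lam = lam and \<alpha> = \<alpha>, OF r(3)] n0[of "mlen m \<alpha>"]
    by fastforce
  then have "{mpow m lam \<alpha> | \<alpha>. \<delta> \<le> norm (mpow m lam \<alpha>)}
      \<subseteq> {mpow m lam \<alpha> | \<alpha>. mlen m \<alpha> \<le> n0}" by blast
  then show ?thesis using finite_mpow_bounded_length finite_subset by blast
qed

lemma uniform_lower_bound:
  fixes f :: "'a::real_normed_vector \<Rightarrow> 'b::real_normed_vector"
  assumes cont: "isCont f 0" and f0: "f 0 \<noteq> 0"
    and nonzero: "\<And>w. w \<in> W \<Longrightarrow> f w \<noteq> 0"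
    and finite_outside: "\<And>\<delta>. \<delta> > 0 \<Longrightarrow> finite {w \<in> W. \<delta> \<le> norm w}"
  obtains c where "c > 0" and "\<And>w. w \<in> W \<Longrightarrow> c \<le> norm (f w)"
proof -
  obtain \<delta> where "\<delta> > 0" and near: "\<And>w. dist w 0 < \<delta> \<Longrightarrow> dist (f w) (f 0) < norm (f 0) / 2"
    using cont f0 unfolding continuous_at_eps_delta by (metis half_gt_zero zero_less_norm_iff)
  have near_bound: "norm (f 0) / 2 \<le> norm (f w)" if "norm w < \<delta>" for w
    using near[of w] that norm_triangle_ineq2[of "f 0" "f w"]
    by (simp add: dist_norm norm_minus_commute)
  define F where "F = {w \<in> W. \<delta> \<le> norm w}"
  have "finite F" unfolding F_def using \<open>\<delta> > 0\<close> by (rule finite_outside)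
  define c where "c = Min (insert (norm (f 0) / 2) ((\<lambda>w. norm (f w)) ` F))"
  show thesis
  proof
    show "c > 0" unfolding c_def using \<open>finite F\<close> f0 nonzero by (auto simp: F_def)
    fix w assume "w \<in> W"
    show "c \<le> norm (f w)"
    proof (cases "norm w < \<delta>")
      case True
      then show ?thesis using near_bound[OF True] \<open>finite F\<close> unfolding c_def
        by (meson Min_le finite_imageI finite_insert insertI1 order_trans)
    next
      case False
      then have "w \<in> F" using \<open>w \<in> W\<close> by (simp add: F_def)
      then show ?thesis using \<open>finite F\<close> unfolding c_def by (intro Min_le) auto
    qed
  qed
qed

theorem mainTheorem10:
  fixes B :: "nat \<Rightarrow> complex^'d^'d" and N :: nat
    and e :: nat and g :: "complex poly"
    and m :: nat and lam :: "nat \<Rightarrow> complex"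
  assumes fact: "\<forall>x. Fdet B N x = x ^ e * poly g x"
    and g0: "poly g 0 \<noteq> 0"
    and snr: "stable_nonresonant (Fdet B N) m lam"
    and nz: "\<forall>i<m. lam i \<noteq> 0"
  shows "\<exists>C>0. \<forall>\<alpha>. mlen m \<alpha> \<ge> 2 \<longrightarrow>
           norm (matrix_inv (Tmat B N (mpow m lam \<alpha>))) \<le> C * norm (mpow m lam \<alpha>) powi (- int e)"
proof -
  define r where "r = Max (insert 0 ((\<lambda>i. norm (lam i)) ` {..<m}))"
  have r: "0 \<le> r" "r < 1" "\<And>i. i < m \<Longrightarrow> norm (lam i) \<le> r"
    using snr unfolding r_def stable_nonresonant_def by (auto simp: Max_ge_iff)
  define W where "W = {mpow m lam \<alpha> | \<alpha>. mlen m \<alpha> \<ge> 2}"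
  have g_nonzero: "poly g w \<noteq> 0" if "w \<in> W" for w
    using that snr fact unfolding W_def stable_nonresonant_def by auto
  have "finite {w \<in> W. \<delta> \<le> norm w}" if "\<delta> > 0" for \<delta>
    using finite_mpow_outside_ball[OF r that] by (rule finite_subset[rotated]) (auto simp: W_def)
  then obtain c where c: "c > 0" "\<And>w. w \<in> W \<Longrightarrow> c \<le> norm (poly g w)"
    using uniform_lower_bound[of "poly g" W] g0 g_nonzero by auto
  obtain K where K: "K \<ge> 0" "\<And>z. norm z \<le> 1 \<Longrightarrow> adj_size (Tmat B N z) \<le> K"
    using adj_size_Tmat_bounded by blast
  have "norm (matrix_inv (Tmat B N (mpow m lam \<alpha>)))
          \<le> (K / c + 1) * norm (mpow m lam \<alpha>) powi (- int e)" if "mlen m \<alpha> \<ge> 2" for \<alpha>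
  proof -
    let ?z = "mpow m lam \<alpha>"
    have z_le_1: "norm ?z \<le> 1"
      using norm_mpow_le[where lam = lam and \<alpha> = \<alpha>, OF r(3)]
        power_le_one[OF r(1) less_imp_le[OF r(2)]] order_trans by blast
    have z_nonzero: "?z \<noteq> 0" using nz by (simp add: mpow_def)
    have det_eq: "det (Tmat B N ?z) = ?z ^ e * poly g ?z"
      using fact by (simp add: Fdet_def)
    have "?z \<in> W" using that by (auto simp: W_def)
    then have "norm (matrix_inv (Tmat B N ?z)) \<le> (K / c) * norm ?z powi (- int e)"
      using norm_inv_Tmat_le[OF det_eq z_nonzero c(1)] c(2) K(2)[OF z_le_1] by blast
    also have "\<dots> \<le> (K / c + 1) * norm ?z powi (- int e)" by (intro mult_right_mono) auto
    finally show ?thesis .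
  qed
  moreover have "K / c + 1 > 0" using K c by (simp add: add_nonneg_pos)
  ultimately show ?thesis by blast
qed

end
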